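(* Let $\Gamma$ be a finite, undirected, simplicial graph with $\#V\Gamma\ge3$ whose complement $\Gamma^c$ is connected. Let $\mathbf{w}\in W_\Gamma$ and let $\mathcal{S}\subseteq W_\Gamma$ be finite. Then there exist $\mathbf{v}\in W_\Gamma$ and a closed walk $(t_1,\dots,t_n)$ in $\Gamma^c$ covering the whole graph such that for all $L\in\mathbb{N}_{\ge1}$ and all $\mathbf{x}\in\mathcal{S}\setminus\{e\}$: $|\mathbf{w}\mathbf{v}(t_1\cdots t_n)^L|=|\mathbf{w}|+|\mathbf{v}|+|(t_1\cdots t_n)^L|$ and $\mathbf{w}\mathbf{v}(t_1\cdots t_n)^L\not\le\mathbf{x}\mathbf{w}\mathbf{v}(t_1\cdots t_n)^L$.
   Context: $\Gamma^c$ is the graph on $V\Gamma$ with an edge between distinct $v,v'$ iff $(v,v')\notin E\Gamma$. $W_\Gamma=\langle V\Gamma\mid v^2=e,\ vv'=v'v \text{ for }(v,v')\in E\Gamma\rangle$ is the right-angled Coxeter group, $|\cdot|$ the word length with respect to the generating set $V\Gamma$, and $\mathbf{u}\le\mathbf{w}$ means $|\mathbf{u}^{-1}\mathbf{w}|=|\mathbf{w}|-|\mathbf{u}|$ (right weak Bruhat order). A walk in a graph $G$ is a sequence of vertices $(v_1,\dots,v_n)$ with $v_i,v_{i+1}$ adjacent in $G$ for all $i<n$; it is closed if in addition $v_1,v_n$ are adjacent, and covers the whole graph if $\{v_1,\dots,v_n\}$ is the full vertex set. The product $t_1\cdots t_n$ is taken in $W_\Gamma$. *)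

theory Defs
  imports Main
begin

definition simple_graph :: "'a set \<Rightarrow> ('a \<Rightarrow> 'a \<Rightarrow> bool) \<Rightarrow> bool" where
  "simple_graph V E \<longleftrightarrow> finite V \<and> (\<forall>a b. E a b \<longrightarrow> E b a)
     \<and> (\<forall>a. \<not> E a a) \<and> (\<forall>a b. E a b \<longrightarrow> a \<in> V \<and> b \<in> V)"

definition compl_adj :: "'a set \<Rightarrow> ('a \<Rightarrow> 'a \<Rightarrow> bool) \<Rightarrow> 'a \<Rightarrow> 'a \<Rightarrow> bool" where
  "compl_adj V E a b \<longleftrightarrow> a \<in> V \<and> b \<in> V \<and> a \<noteq> b \<and> \<not> E a b"

definition compl_connected :: "'a set \<Rightarrow> ('a \<Rightarrow> 'a \<Rightarrow> bool) \<Rightarrow> bool" where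
  "compl_connected V E \<longleftrightarrow> (\<forall>a\<in>V. \<forall>b\<in>V. (compl_adj V E)\<^sup>*\<^sup>* a b)"

definition compl_walk :: "'a set \<Rightarrow> ('a \<Rightarrow> 'a \<Rightarrow> bool) \<Rightarrow> 'a list \<Rightarrow> bool" where
  "compl_walk V E ts \<longleftrightarrow> ts \<noteq> [] \<and> set ts \<subseteq> V \<and>
     (\<forall>i. Suc i < length ts \<longrightarrow> compl_adj V E (ts ! i) (ts ! Suc i))"

definition compl_closed_walk :: "'a set \<Rightarrow> ('a \<Rightarrow> 'a \<Rightarrow> bool) \<Rightarrow> 'a list \<Rightarrow> bool" where
  "compl_closed_walk V E ts \<longleftrightarrow> compl_walk V E ts \<and> compl_adj V E (hd ts) (last ts)"

text \<open>Right-angled Coxeter group W_Gamma: elements are represented by words over V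
(lists), multiplication is concatenation, the identity is the empty word, and two
words represent the same element iff they are related by the congruence generated by
the relations v v = e (v in V) and v v' = v' v for (v,v') an edge.\<close>
inductive racg_step :: "'a set \<Rightarrow> ('a \<Rightarrow> 'a \<Rightarrow> bool) \<Rightarrow> 'a list \<Rightarrow> 'a list \<Rightarrow> bool"
  for V E where
  cancel: "a \<in> V \<Longrightarrow> racg_step V E (xs @ [a, a] @ ys) (xs @ ys)"
| commute: "E a b \<Longrightarrow> racg_step V E (xs @ [a, b] @ ys) (xs @ [b, a] @ ys)"

definition racg_eq :: "'a set \<Rightarrow> ('a \<Rightarrow> 'a \<Rightarrow> bool) \<Rightarrow> 'a list \<Rightarrow> 'a list \<Rightarrow> bool" where
  "racg_eq V E = (symclp (racg_step V E))\<^sup>*\<^sup>*"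

definition racg_len :: "'a set \<Rightarrow> ('a \<Rightarrow> 'a \<Rightarrow> bool) \<Rightarrow> 'a list \<Rightarrow> nat" where
  "racg_len V E w = (LEAST n. \<exists>u. u \<in> lists V \<and> racg_eq V E u w \<and> length u = n)"

text \<open>Inverse of the element represented by w is represented by rev w (generators are
involutions). Right weak Bruhat order: u \<le> w iff |u^{-1} w| = |w| - |u|.\<close>
definition racg_le :: "'a set \<Rightarrow> ('a \<Rightarrow> 'a \<Rightarrow> bool) \<Rightarrow> 'a list \<Rightarrow> 'a list \<Rightarrow> bool" where
  "racg_le V E u w \<longleftrightarrow>
     int (racg_len V E (rev u @ w)) = int (racg_len V E w) - int (racg_len V E u)"

end

theory Submission
  imports Defs
begin

text \<open>
  A word is reduced if no letter \<open>a\<close> occurs twice with only letters commuting with \<open>a\<close> in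
  between; reduced words are geodesics. Conjugating a reduced word \<open>Z\<close> by a letter \<open>p\<close>
  lengthens it by two exactly when \<open>p\<close> can be moved neither to the front nor to the end of
  \<open>Z\<close> and does not commute with all of \<open>Z\<close>; once this happens, further conjugation along
  a walk in the complement graph keeps adding two letters per step.

  For a nontrivial \<open>Y\<close> one finds, by induction on \<open>|Y|\<close>, a complement walk along which
  conjugation eventually grows: along any walk the length of the conjugates either grows, or
  first shrinks (then recurse), or stays constant. It cannot stay constant along a suitable walk:
  either some letter outside \<open>Y\<close> and not commuting with all of it can be reached, or \<open>Y\<close>
  uses every letter, and then bouncing \<open>p, q, p, q, \<dots>\<close> along a complement edge, with \<open>t\<close>
  another complement neighbour of \<open>p\<close>, moves the first \<open>t\<close> of a reduced representative
  forward in every round.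

  Concatenating such walks for the conjugates \<open>w\<^sup>-\<^sup>1 x w\<close>, \<open>x \<in> S\<close>, and then entering
  a closed covering walk \<open>ts\<close> gives \<open>v\<close>: for \<open>u = w v ts\<^sup>L\<close> the conjugate
  \<open>u\<^sup>-\<^sup>1 x u\<close> is longer than \<open>x\<close>, which rules out \<open>u \<le> x u\<close>, and the lengths add up
  in \<open>u\<close> because \<open>v\<close> starts with a letter that is not a right descent of a reduced form
  of \<open>w\<close>.
\<close>

lemma length_takeWhile_move_to_end_le:
  assumes "t \<noteq> q" "t \<in> set (A @ q # B)"
  shows "length (takeWhile (\<lambda>x. x \<noteq> t) (A @ B @ [q])) \<le> length (takeWhile (\<lambda>x. x \<noteq> t) (A @ q # B))"
proof (cases "t \<in> set A")
  case False
  then have "t \<in> set B" using assms by auto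
  with False assms(1) show ?thesis by (auto simp: takeWhile_append)
next
  case True
  then show ?thesis by (simp add: takeWhile_append1[OF True])
qed

lemma length_takeWhile_move_to_end_less:
  assumes "t \<noteq> p" "t \<in> set (A @ p # B)" "t \<notin> set A"
  shows "length (takeWhile (\<lambda>x. x \<noteq> t) (A @ B @ [p])) < length (takeWhile (\<lambda>x. x \<noteq> t) (A @ p # B))"
proof -
  have "t \<in> set B" using assms by auto
  with assms(1,3) show ?thesis by (auto simp: takeWhile_append)
qed

lemma length_concat_replicate_ge: "xs \<noteq> [] \<Longrightarrow> n \<le> length (concat (replicate n xs))"
  by (cases xs) (simp_all add: length_concat sum_list_replicate)

lemma rtranclp_enters:
  "R\<^sup>*\<^sup>* x y \<Longrightarrow> x \<notin> A \<Longrightarrow> y \<in> A \<Longrightarrow> \<exists>u v. R u v \<and> u \<notin> A \<and> v \<in> A"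
  by (induction rule: rtranclp_induct) auto

locale racg_graph =
  fixes V :: "'a set" and E :: "'a \<Rightarrow> 'a \<Rightarrow> bool"
  assumes simple: "simple_graph V E"
begin

abbreviation weq :: "'a list \<Rightarrow> 'a list \<Rightarrow> bool" (infix "\<simeq>" 50)
  where "u \<simeq> w \<equiv> racg_eq V E u w"

abbreviation len :: "'a list \<Rightarrow> nat"
  where "len \<equiv> racg_len V E"

lemma E_sym: "E a b \<Longrightarrow> E b a"
  using simple unfolding simple_graph_def by blast

lemma E_irrefl [simp]: "\<not> E a a"
  using simple unfolding simple_graph_def by blast

lemma finite_V: "finite V"
  using simple unfolding simple_graph_def by blast

lemma compl_adjD: "compl_adj V E a b \<Longrightarrow> a \<in> V \<and> b \<in> V \<and> a \<noteq> b \<and> \<not> E a b \<and> \<not> E b a"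
  unfolding compl_adj_def using E_sym by blast

lemma compl_adj_sym: "compl_adj V E a b \<Longrightarrow> compl_adj V E b a"
  unfolding compl_adj_def using E_sym by blast

lemma weq_refl [simp]: "u \<simeq> u"
  unfolding racg_eq_def by simp

lemma weq_sym: "u \<simeq> w \<Longrightarrow> w \<simeq> u"
  unfolding racg_eq_def by (rule rtranclp_symclp_sym)

lemma weq_trans [trans]: "u \<simeq> w \<Longrightarrow> w \<simeq> x \<Longrightarrow> u \<simeq> x"
  unfolding racg_eq_def by simp

lemma racg_step_weq: "racg_step V E u w \<Longrightarrow> u \<simeq> w"
  unfolding racg_eq_def by auto

lemma racg_step_context: "racg_step V E u w \<Longrightarrow> racg_step V E (xs @ u @ ys) (xs @ w @ ys)"
proof (induction rule: racg_step.induct)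
  case (cancel a as bs)
  then show ?case using racg_step.cancel[where xs="xs @ as" and ys="bs @ ys"] by simp
next
  case (commute a b as bs)
  then show ?case using racg_step.commute[where xs="xs @ as" and ys="bs @ ys"] by simp
qed

lemma racg_step_rev: "racg_step V E u w \<Longrightarrow> racg_step V E (rev u) (rev w)"
proof (induction rule: racg_step.induct)
  case (cancel a as bs)
  then show ?case using racg_step.cancel[where xs="rev bs" and ys="rev as"] by simp
next
  case (commute a b as bs)
  then show ?case using racg_step.commute[where xs="rev bs" and ys="rev as" and a=b and b=a] E_sym by simp
qed

lemma weq_map:
  assumes "\<And>u w. racg_step V E u w \<Longrightarrow> racg_step V E (f u) (f w)" and "u \<simeq> w"
  shows "f u \<simeq> f w"
proof -
  have "symclp (racg_step V E) u w \<Longrightarrow> symclp (racg_step V E) (f u) (f w)" for u w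
    using assms(1) by (auto simp: symclp_def)
  with assms(2) show ?thesis
    unfolding racg_eq_def by (induction rule: rtranclp_induct) (auto intro: rtranclp.rtrancl_into_rtrancl)
qed

lemma weq_context: "u \<simeq> w \<Longrightarrow> xs @ u @ ys \<simeq> xs @ w @ ys"
  using weq_map[where f = "\<lambda>u. xs @ u @ ys"] racg_step_context by blast

lemma weq_rev: "u \<simeq> w \<Longrightarrow> rev u \<simeq> rev w"
  using weq_map[where f = rev] racg_step_rev by blast

lemma weq_append: "u \<simeq> u' \<Longrightarrow> w \<simeq> w' \<Longrightarrow> u @ w \<simeq> u' @ w'"
  using weq_context[of u u' "[]" w] weq_context[of w w' u' "[]"] weq_trans by auto

lemma weq_cancel: "a \<in> V \<Longrightarrow> xs @ a # a # ys \<simeq> xs @ ys"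
  using racg_step_weq[OF racg_step.cancel[where xs=xs and ys=ys]] by simp

lemma weq_commute_past: "\<forall>x\<in>set u. E a x \<Longrightarrow> xs @ a # u @ ys \<simeq> xs @ u @ a # ys"
proof (induction u arbitrary: xs)
  case (Cons b u)
  have "xs @ a # b # u @ ys \<simeq> (xs @ [b]) @ a # u @ ys"
    using racg_step_weq[OF racg_step.commute[where xs=xs and ys="u @ ys"]] Cons.prems by simp
  also have "\<dots> \<simeq> (xs @ [b]) @ u @ a # ys"
    using Cons.IH[of "xs @ [b]"] Cons.prems by simp
  finally show ?case by simp
qed simp

lemma weq_rev_append_self: "w \<in> lists V \<Longrightarrow> rev w @ w \<simeq> []"
proof (induction w)
  case (Cons a w)
  have "rev (a # w) @ a # w \<simeq> rev w @ w" using weq_cancel Cons.prems by simp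
  then show ?case using Cons weq_trans by simp
qed simp

lemma weq_append_rev_self: "w \<in> lists V \<Longrightarrow> w @ rev w \<simeq> []"
  using weq_rev_append_self[of "rev w"] by (simp add: in_lists_conv_set)

definition conjugate :: "'a list \<Rightarrow> 'a list \<Rightarrow> 'a list" where
  "conjugate Y P = rev P @ Y @ P"

lemma conjugate_Nil [simp]: "conjugate Y [] = Y"
  by (simp add: conjugate_def)

lemma conjugate_append: "conjugate Y (P @ Q) = conjugate (conjugate Y P) Q"
  by (simp add: conjugate_def)

lemma conjugate_snoc: "conjugate Y (P @ [p]) = p # conjugate Y P @ [p]"
  by (simp add: conjugate_def)

lemma conjugate_rev: "conjugate (rev Y) P = rev (conjugate Y P)"
  by (simp add: conjugate_def)

lemma conjugate_in_lists: "Y \<in> lists V \<Longrightarrow> P \<in> lists V \<Longrightarrow> conjugate Y P \<in> lists V"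
  by (auto simp: conjugate_def)

lemma conjugate_weq: "Y \<simeq> Y' \<Longrightarrow> conjugate Y P \<simeq> conjugate Y' P"
  unfolding conjugate_def by (rule weq_context)

lemma conjugate_trivialD:
  assumes P: "P \<in> lists V" and Y: "conjugate Y P \<simeq> []"
  shows "Y \<simeq> []"
proof -
  have "Y \<simeq> (P @ rev P) @ Y @ (P @ rev P)"
    using weq_append[OF weq_append[OF weq_append_rev_self[OF P] weq_refl] weq_append_rev_self[OF P]]
    by (simp add: weq_sym)
  also have "\<dots> = P @ conjugate Y P @ rev P"
    by (simp add: conjugate_def)
  also have "\<dots> \<simeq> P @ rev P"
    using weq_context[OF Y] by simp
  also have "\<dots> \<simeq> []"
    using weq_append_rev_self[OF P] .
  finally show ?thesis .
qed

section \<open>Reduced words are geodesics\<close>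

definition reduced :: "'a list \<Rightarrow> bool" where
  "reduced u \<longleftrightarrow> \<not> (\<exists>u1 a u2 u3. u = u1 @ a # u2 @ a # u3 \<and> (\<forall>x\<in>set u2. E a x))"

definition left_descent :: "'a list \<Rightarrow> 'a \<Rightarrow> bool" where
  "left_descent Z a \<longleftrightarrow> (\<exists>A B. Z = A @ a # B \<and> (\<forall>x\<in>set A. E a x))"

definition right_descent :: "'a list \<Rightarrow> 'a \<Rightarrow> bool" where
  "right_descent Z a \<longleftrightarrow> (\<exists>A B. Z = A @ a # B \<and> (\<forall>x\<in>set B. E a x))"

lemma not_reduced: "\<forall>x\<in>set u2. E a x \<Longrightarrow> \<not> reduced (u1 @ a # u2 @ a # u3)"
  unfolding reduced_def by blast

lemma reduced_Nil [simp]: "reduced []"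
  unfolding reduced_def by simp

lemma reduced_singleton [simp]: "reduced [a]"
  unfolding reduced_def by (auto simp: append_eq_Cons_conv Cons_eq_append_conv)

lemma reduced_appendD1: "reduced (u @ w) \<Longrightarrow> reduced u"
  unfolding reduced_def by (metis append.assoc append_Cons)

lemma reduced_appendD2: "reduced (u @ w) \<Longrightarrow> reduced w"
  unfolding reduced_def by (metis append.assoc)

lemma reduced_rev: "reduced (rev u) \<longleftrightarrow> reduced u"
proof -
  have "reduced (rev u)" if "reduced u" for u
  proof (rule ccontr)
    assume "\<not> reduced (rev u)"
    then obtain u1 a u2 u3 where "rev u = u1 @ a # u2 @ a # u3" and "\<forall>x\<in>set u2. E a x"
      unfolding reduced_def by blast
    then have "u = rev u3 @ a # rev u2 @ a # rev u1" and "\<forall>x\<in>set (rev u2). E a x"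
      by (simp_all add: rev_swap)
    with that show False using not_reduced by blast
  qed
  then show ?thesis by fastforce
qed

lemma right_descent_rev: "right_descent (rev Z) a \<longleftrightarrow> left_descent Z a"
proof
  assume "right_descent (rev Z) a"
  then obtain A B where "rev Z = A @ a # B" "\<forall>x\<in>set B. E a x"
    unfolding right_descent_def by blast
  then have "Z = rev B @ a # rev A" "\<forall>x\<in>set (rev B). E a x"
    by (simp_all add: rev_swap)
  then show "left_descent Z a" unfolding left_descent_def by blast
next
  assume "left_descent Z a"
  then obtain A B where "Z = A @ a # B" "\<forall>x\<in>set A. E a x"
    unfolding left_descent_def by blast
  then have "rev Z = rev B @ a # rev A" "\<forall>x\<in>set (rev A). E a x" by simp_all
  then show "right_descent (rev Z) a" unfolding right_descent_def by blast
qed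

lemma right_descent_snoc:
  assumes "right_descent (X @ [a]) x"
  shows "x = a \<or> E x a"
proof -
  obtain A B where eq: "X @ [a] = A @ x # B" and B: "\<forall>y\<in>set B. E x y"
    using assms unfolding right_descent_def by blast
  have "a = last (x # B)"
    using arg_cong[OF eq, of last] by simp
  then have "a \<in> set (x # B)"
    by (metis last_in_set list.distinct(1))
  with B show ?thesis by auto
qed

lemma left_descent_Cons: "left_descent (a # X) x \<Longrightarrow> x = a \<or> E x a"
  using right_descent_snoc[of "rev X" a x] right_descent_rev[of "a # X" x] by simp

lemma left_descent_in_set: "left_descent Z a \<Longrightarrow> a \<in> set Z"
  unfolding left_descent_def by auto

lemma right_descent_in_set: "right_descent Z a \<Longrightarrow> a \<in> set Z"
  unfolding right_descent_def by auto

lemma right_descents_commute: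
  assumes a: "right_descent Z a" and b: "right_descent Z b" and "a \<noteq> b"
  shows "E a b"
proof -
  obtain A B where AB: "Z = A @ a # B" "\<forall>x\<in>set B. E a x"
    using a unfolding right_descent_def by blast
  obtain A' B' where AB': "Z = A' @ b # B'" "\<forall>x\<in>set B'. E b x"
    using b unfolding right_descent_def by blast
  from AB(1) AB'(1) obtain us where
    "(A = A' @ us \<and> us @ a # B = b # B') \<or> (A @ us = A' \<and> a # B = us @ b # B')"
    using append_eq_append_conv2[of A "a # B" A' "b # B'"] by auto
  then have "a \<in> set B' \<or> b \<in> set B"
    using \<open>a \<noteq> b\<close> by (cases us) auto
  then show ?thesis
    using AB(2) AB'(2) E_sym by blast
qed

lemma reduced_append:
  assumes "reduced A" and "reduced B" and no_common: "\<And>a. right_descent A a \<Longrightarrow> \<not> left_descent B a"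
  shows "reduced (A @ B)"
proof (rule ccontr)
  assume "\<not> reduced (A @ B)"
  then obtain p1 a p2 p3 where eq: "A @ B = p1 @ a # p2 @ a # p3" and ca: "\<forall>x\<in>set p2. E a x"
    unfolding reduced_def by blast
  consider (in_B) m where "B = m @ a # p2 @ a # p3"
    | (across) q1 m where "A = p1 @ a # q1" "p2 = q1 @ m" "B = m @ a # p3"
    | (in_A) q2 where "A = p1 @ a # p2 @ a # q2"
    using eq by (auto simp: append_eq_append_conv2 append_eq_Cons_conv Cons_eq_append_conv)
  then show False
  proof cases
    case in_B
    then show False using \<open>reduced B\<close> not_reduced[OF ca] by metis
  next
    case across
    then have "right_descent A a" "left_descent B a"
      unfolding right_descent_def left_descent_def using ca by auto
    then show False using no_common by blast
  next
    case in_A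
    then show False using \<open>reduced A\<close> not_reduced[OF ca] by metis
  qed
qed

lemma reduced_snoc:
  assumes "reduced u" and "\<not> right_descent u s"
  shows "reduced (u @ [s])"
proof (rule reduced_append[OF assms(1) reduced_singleton])
  fix a assume "right_descent u a"
  then show "\<not> left_descent [s] a"
    using assms(2) left_descent_in_set by fastforce
qed

lemma reduced_delete:
  assumes red: "reduced (u1 @ s # u2)" and comm: "\<forall>x\<in>set u2. E s x"
  shows "reduced (u1 @ u2)"
proof (rule reduced_append)
  show "reduced u1"
    using red by (rule reduced_appendD1)
  show "reduced u2"
    using red reduced_appendD2[of "u1 @ [s]" u2] by simp
  fix a assume "right_descent u1 a" show "\<not> left_descent u2 a"
  proof
    assume "left_descent u2 a"
    then obtain C D where u2: "u2 = C @ a # D" "\<forall>x\<in>set C. E a x"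
      unfolding left_descent_def by blast
    obtain A B where u1: "u1 = A @ a # B" "\<forall>x\<in>set B. E a x"
      using \<open>right_descent u1 a\<close> unfolding right_descent_def by blast
    have "E a s" using comm u2(1) E_sym by simp
    then have "\<forall>x\<in>set (B @ s # C). E a x" using u1(2) u2(2) by auto
    moreover have "u1 @ s # u2 = A @ a # (B @ s # C) @ a # D" using u1(1) u2(1) by simp
    ultimately show False using red not_reduced by metis
  qed
qed

lemma not_right_descent_delete:
  assumes red: "reduced (u1 @ s # u2)" and comm: "\<forall>x\<in>set u2. E s x"
  shows "\<not> right_descent (u1 @ u2) s"
proof
  assume "right_descent (u1 @ u2) s"
  then obtain v1 v2 where eq: "u1 @ u2 = v1 @ s # v2" and v2: "\<forall>x\<in>set v2. E s x"
    unfolding right_descent_def by blast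
  have "s \<notin> set u2" using comm by auto
  from eq obtain us where "(u1 = v1 @ us \<and> us @ u2 = s # v2) \<or> (u1 @ us = v1 \<and> u2 = us @ s # v2)"
    using append_eq_append_conv2[of u1 u2 v1 "s # v2"] by blast
  with \<open>s \<notin> set u2\<close> obtain m where "u1 = v1 @ s # m" "v2 = m @ u2"
    by (cases us) auto
  then have "u1 @ s # u2 = v1 @ s # m @ s # u2" and "\<forall>x\<in>set m. E s x" using v2 by auto
  then show False using red not_reduced by metis
qed

text \<open>Right multiplication by the letter \<open>s\<close> on tables of projections. On the table of a
  reduced word \<open>u\<close>, \<open>ends_in s\<close> detects whether \<open>s\<close> is a right descent of \<open>u\<close>; then \<open>s\<close>
  is cancelled, otherwise appended. The resulting \<open>proj_word\<close> respects the defining relations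
  and agrees with \<open>projections\<close> on reduced words, whose length is read off the diagonal
  \<open>projections u a a\<close>; this is what makes reduced words geodesics.\<close>

definition projections :: "'a list \<Rightarrow> 'a \<Rightarrow> 'a \<Rightarrow> 'a list" where
  "projections u a b = (if E a b then [] else filter (\<lambda>x. x = a \<or> x = b) u)"

definition ends_in :: "'a \<Rightarrow> ('a \<Rightarrow> 'a \<Rightarrow> 'a list) \<Rightarrow> bool" where
  "ends_in s F \<longleftrightarrow> (\<forall>b. \<not> E s b \<longrightarrow> F s b \<noteq> [] \<and> last (F s b) = s)"

definition proj_act :: "'a \<Rightarrow> ('a \<Rightarrow> 'a \<Rightarrow> 'a list) \<Rightarrow> 'a \<Rightarrow> 'a \<Rightarrow> 'a list" where
  "proj_act s F = (\<lambda>a b. if E a b \<or> (a \<noteq> s \<and> b \<noteq> s) then F a b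
      else if ends_in s F then butlast (F a b) else F a b @ [s])"

definition proj_word :: "'a list \<Rightarrow> 'a \<Rightarrow> 'a \<Rightarrow> 'a list" where
  "proj_word u = foldl (\<lambda>F s. proj_act s F) (projections []) u"

lemma proj_word_snoc: "proj_word (u @ [s]) = proj_act s (proj_word u)"
  unfolding proj_word_def by simp

lemma projections_commuting_suffix:
  "\<forall>x\<in>set u2. E s x \<Longrightarrow> \<not> E a b \<Longrightarrow> a = s \<or> b = s \<Longrightarrow> projections u2 a b = []"
  unfolding projections_def using E_sym by (auto simp: filter_empty_conv)

lemma ends_in_projections_iff: "ends_in s (projections u) \<longleftrightarrow> right_descent u s"
proof
  assume ends: "ends_in s (projections u)"
  then have "projections u s s \<noteq> []" unfolding ends_in_def by simp
  then have "s \<in> set u" unfolding projections_def by (auto simp: filter_empty_conv)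
  then obtain u1 u2 where u: "u = u1 @ s # u2" and "s \<notin> set u2"
    by (meson split_list_last)
  have "E s x" if "x \<in> set u2" for x
  proof (rule ccontr)
    assume nE: "\<not> E s x"
    have "projections u s x = projections u1 s x @ s # projections u2 s x"
      using nE u unfolding projections_def by simp
    moreover have "projections u2 s x \<noteq> []"
      using that nE unfolding projections_def by (auto simp: filter_empty_conv)
    moreover have "last (projections u2 s x) \<noteq> s"
      using \<open>s \<notin> set u2\<close> last_in_set[of "projections u2 s x"] calculation(2)
      unfolding projections_def by (auto simp: nE)
    ultimately show False using ends[unfolded ends_in_def, rule_format, OF nE] by simp
  qed
  with u show "right_descent u s" unfolding right_descent_def by blast
next
  assume "right_descent u s"
  then obtain u1 u2 where u: "u = u1 @ s # u2" and comm: "\<forall>x\<in>set u2. E s x"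
    unfolding right_descent_def by blast
  show "ends_in s (projections u)" unfolding ends_in_def
  proof (intro allI impI)
    fix b assume nb: "\<not> E s b"
    have "projections u s b = projections u1 s b @ [s]"
      using projections_commuting_suffix[OF comm nb] nb u unfolding projections_def by simp
    then show "projections u s b \<noteq> [] \<and> last (projections u s b) = s" by simp
  qed
qed

lemma proj_act_not_descent:
  "\<not> right_descent u s \<Longrightarrow> proj_act s (projections u) = projections (u @ [s])"
  unfolding ends_in_projections_iff[symmetric] proj_act_def projections_def by (auto intro!: ext)

lemma projections_move_to_end:
  assumes comm: "\<forall>x\<in>set u2. E s x"
  shows "projections (u1 @ s # u2) = projections (u1 @ u2 @ [s])"
proof (intro ext)
  fix a b
  show "projections (u1 @ s # u2) a b = projections (u1 @ u2 @ [s]) a b"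
  proof (cases "E a b \<or> (a \<noteq> s \<and> b \<noteq> s)")
    case False
    then show ?thesis
      using projections_commuting_suffix[OF comm] unfolding projections_def by auto
  qed (auto simp: projections_def)
qed

lemma proj_act_descent:
  assumes u: "u = u1 @ s # u2" and comm: "\<forall>x\<in>set u2. E s x"
  shows "proj_act s (projections u) = projections (u1 @ u2)"
proof (intro ext)
  have ends: "ends_in s (projections u)"
    using u comm ends_in_projections_iff right_descent_def by blast
  fix a b
  show "proj_act s (projections u) a b = projections (u1 @ u2) a b"
  proof (cases "E a b \<or> (a \<noteq> s \<and> b \<noteq> s)")
    case False
    have "projections u a b = projections (u1 @ u2 @ [s]) a b"
      using projections_move_to_end[OF comm] u by simp
    also have "\<dots> = projections (u1 @ u2) a b @ [s]"
      using False unfolding projections_def by auto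
    finally show ?thesis using False ends unfolding proj_act_def by simp
  qed (auto simp: proj_act_def projections_def u)
qed

lemma proj_act_involutive: "reduced u \<Longrightarrow> proj_act s (proj_act s (projections u)) = projections u"
proof (cases "right_descent u s")
  case False
  then show ?thesis
    using proj_act_not_descent proj_act_descent[of "u @ [s]" u s "[]"] by simp
next
  case True
  assume red: "reduced u"
  obtain u1 u2 where u: "u = u1 @ s # u2" and comm: "\<forall>x\<in>set u2. E s x"
    using True unfolding right_descent_def by blast
  have "proj_act s (projections u) = projections (u1 @ u2)"
    using proj_act_descent[OF u comm] .
  moreover have "proj_act s (projections (u1 @ u2)) = projections (u1 @ u2 @ [s])"
    using proj_act_not_descent not_right_descent_delete red u comm by simp
  ultimately show ?thesis
    using projections_move_to_end[OF comm, of u1] u by simp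
qed

lemma proj_act_apply_other: "E a b \<or> (a \<noteq> s \<and> b \<noteq> s) \<Longrightarrow> proj_act s F a b = F a b"
  by (simp add: proj_act_def)

lemma ends_in_proj_act_commuting: "E a b \<Longrightarrow> ends_in a (proj_act b F) \<longleftrightarrow> ends_in a F"
  unfolding ends_in_def by (metis E_irrefl proj_act_apply_other)

lemma proj_act_commute_apply:
  assumes ab: "E a b" and untouched: "E x y \<or> (x \<noteq> a \<and> y \<noteq> a)"
  shows "proj_act a (proj_act b F) x y = proj_act b (proj_act a F) x y"
proof -
  have "proj_act a (proj_act b F) x y = proj_act b F x y"
    using untouched by (rule proj_act_apply_other)
  moreover have "proj_act a F x y = F x y"
    using untouched by (rule proj_act_apply_other)
  ultimately show ?thesis
    using ends_in_proj_act_commuting[OF E_sym[OF ab]] by (simp add: proj_act_def[of b])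
qed

lemma proj_act_commute:
  assumes ab: "E a b"
  shows "proj_act a (proj_act b F) = proj_act b (proj_act a F)"
proof (intro ext)
  fix x y
  have "E x y \<or> (x \<noteq> a \<and> y \<noteq> a) \<or> (x \<noteq> b \<and> y \<noteq> b)"
    using ab E_sym by auto
  then show "proj_act a (proj_act b F) x y = proj_act b (proj_act a F) x y"
    using proj_act_commute_apply[OF ab] proj_act_commute_apply[OF E_sym[OF ab]] by metis
qed

lemma proj_word_reduced_rep:
  "\<exists>u'. reduced u' \<and> proj_word u = projections u' \<and> length u' \<le> length u \<and> set u' \<subseteq> set u"
proof (induction u rule: rev_induct)
  case Nil
  then show ?case by (auto simp: proj_word_def)
next
  case (snoc s u)
  then obtain u' where red: "reduced u'" and P: "proj_word u = projections u'"
    and l: "length u' \<le> length u" and st: "set u' \<subseteq> set u"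
    by blast
  show ?case
  proof (cases "right_descent u' s")
    case True
    then obtain u1 u2 where u': "u' = u1 @ s # u2" and comm: "\<forall>x\<in>set u2. E s x"
      unfolding right_descent_def by blast
    have "proj_word (u @ [s]) = projections (u1 @ u2)"
      using proj_word_snoc P proj_act_descent[OF u' comm] by simp
    moreover have "reduced (u1 @ u2)" using reduced_delete red u' comm by simp
    ultimately show ?thesis using l st u' by (intro exI[of _ "u1 @ u2"]) auto
  next
    case False
    have "proj_word (u @ [s]) = projections (u' @ [s])"
      using proj_word_snoc P proj_act_not_descent[OF False] by simp
    moreover have "reduced (u' @ [s])" using reduced_snoc[OF red False] .
    ultimately show ?thesis using l st by (intro exI[of _ "u' @ [s]"]) auto
  qed
qed

lemma proj_word_reduced: "reduced u \<Longrightarrow> proj_word u = projections u"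
proof (induction u rule: rev_induct)
  case (snoc s u)
  have "\<not> right_descent u s"
    using snoc.prems not_reduced unfolding right_descent_def by fastforce
  then show ?case
    using proj_word_snoc snoc reduced_appendD1 proj_act_not_descent by metis
qed (simp add: proj_word_def)

lemma proj_word_weq:
  assumes "u \<simeq> w"
  shows "proj_word u = proj_word w"
proof -
  have invariant: "proj_word u = proj_word w" if "racg_step V E u w" for u w
    using that
  proof (induction rule: racg_step.induct)
    case (cancel a xs ys)
    obtain u' where "reduced u'" "proj_word xs = projections u'"
      using proj_word_reduced_rep by blast
    then show ?case
      using proj_act_involutive unfolding proj_word_def by simp
  next
    case (commute a b xs ys)
    then show ?case
      using proj_act_commute[OF commute] unfolding proj_word_def by simp
  qed
  from assms show ?thesis
    unfolding racg_eq_def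
    by (induction rule: rtranclp_induct) (auto simp: symclp_def dest: invariant)
qed

lemma length_eq_sum_projections: "set u \<subseteq> V \<Longrightarrow> length u = (\<Sum>a\<in>V. length (projections u a a))"
proof -
  assume "set u \<subseteq> V"
  moreover have "length (projections u a a) = count_list u a" for a
    unfolding projections_def by (induction u) auto
  ultimately show ?thesis using sum_count_set[OF _ finite_V, of u] by simp
qed

lemma weq_len: "u \<simeq> w \<Longrightarrow> len u = len w"
  unfolding racg_len_def using weq_sym weq_trans by metis

lemma len_le_length: "w \<in> lists V \<Longrightarrow> len w \<le> length w"
  unfolding racg_len_def by (rule Least_le) auto

lemma exists_geodesic: "w \<in> lists V \<Longrightarrow> \<exists>u. u \<in> lists V \<and> u \<simeq> w \<and> length u = len w"
  unfolding racg_len_def by (rule LeastI_ex) auto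

theorem len_reduced:
  assumes red: "reduced u" and uV: "u \<in> lists V"
  shows "len u = length u"
proof (rule antisym)
  show "len u \<le> length u" using len_le_length[OF uV] .
  obtain u' where u': "u' \<in> lists V" "u' \<simeq> u" "length u' = len u"
    using exists_geodesic[OF uV] by blast
  obtain u'' where red'': "reduced u''" and proj: "proj_word u' = projections u''"
    and shorter: "length u'' \<le> length u'" and sub: "set u'' \<subseteq> set u'"
    using proj_word_reduced_rep by blast
  have "projections u'' = projections u"
    using proj proj_word_weq[OF u'(2)] proj_word_reduced[OF red] by simp
  moreover have "set u'' \<subseteq> V" using sub u'(1) by auto
  ultimately have "length u'' = length u"
    using length_eq_sum_projections uV by (metis in_listsD subsetI)
  then show "length u \<le> len u" using shorter u'(3) by simp
qed

lemma len_less_length_if_not_reduced: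
  assumes uV: "u \<in> lists V" and "\<not> reduced u"
  shows "len u < length u"
proof -
  obtain u1 a u2 u3 where u: "u = u1 @ a # u2 @ a # u3" and comm: "\<forall>x\<in>set u2. E a x"
    using \<open>\<not> reduced u\<close> unfolding reduced_def by blast
  have "u \<simeq> u1 @ u2 @ a # a # u3"
    using weq_commute_past[OF comm, of u1 "a # u3"] u by simp
  also have "\<dots> \<simeq> u1 @ u2 @ u3"
    using weq_cancel[of a "u1 @ u2" u3] uV u by simp
  finally have "len u = len (u1 @ u2 @ u3)" by (rule weq_len)
  also have "\<dots> \<le> length (u1 @ u2 @ u3)"
    using len_le_length[of "u1 @ u2 @ u3"] uV u by simp
  finally show ?thesis using u by simp
qed

lemma reduced_iff_len: "u \<in> lists V \<Longrightarrow> reduced u \<longleftrightarrow> len u = length u"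
  using len_reduced len_less_length_if_not_reduced by fastforce

lemma exists_reduced_rep:
  assumes "w \<in> lists V"
  obtains u where "u \<in> lists V" "reduced u" "u \<simeq> w" "length u = len w"
proof -
  obtain u where u: "u \<in> lists V" "u \<simeq> w" "length u = len w"
    using exists_geodesic[OF assms] by blast
  then have "reduced u" using reduced_iff_len weq_len by simp
  with u that show ?thesis by blast
qed

lemma len_append_le:
  assumes "u \<in> lists V" "w \<in> lists V"
  shows "len (u @ w) \<le> len u + len w"
proof -
  obtain u' w' where u': "u' \<in> lists V" "u' \<simeq> u" "length u' = len u"
    and w': "w' \<in> lists V" "w' \<simeq> w" "length w' = len w"
    using exists_geodesic assms by metis
  have "len (u @ w) = len (u' @ w')"
    using weq_len[OF weq_append[OF u'(2) w'(2)]] by simp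
  also have "\<dots> \<le> length (u' @ w')"
    using len_le_length[of "u' @ w'"] u'(1) w'(1) by simp
  finally show ?thesis using u'(3) w'(3) by simp
qed

lemma len_rev:
  assumes "u \<in> lists V"
  shows "len (rev u) = len u"
proof -
  obtain u' where u': "u' \<in> lists V" "reduced u'" "u' \<simeq> u" "length u' = len u"
    using exists_reduced_rep[OF assms] by blast
  have "len (rev u) = len (rev u')"
    using weq_len[OF weq_rev[OF u'(3)]] by simp
  also have "\<dots> = length u'"
    using len_reduced[of "rev u'"] u' reduced_rev by (simp add: in_lists_conv_set)
  finally show ?thesis using u'(4) by simp
qed

section \<open>Conjugation by a letter\<close>

lemma reduced_conj_letter:
  assumes red: "reduced Z" and "\<not> left_descent Z p" "\<not> right_descent Z p" "\<not> (\<forall>x\<in>set Z. E p x)"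
  shows "reduced (p # Z @ [p])"
proof -
  have "reduced ([p] @ Z)"
    using reduced_append[OF reduced_singleton red] right_descent_in_set assms(2) by fastforce
  moreover have "\<not> right_descent (p # Z) p"
  proof
    assume "right_descent (p # Z) p"
    then obtain A B where eq: "p # Z = A @ p # B" and comm: "\<forall>x\<in>set B. E p x"
      unfolding right_descent_def by blast
    show False
    proof (cases A)
      case Nil
      then show False using eq comm assms(4) by simp
    next
      case (Cons y A')
      then have "right_descent Z p" using eq comm unfolding right_descent_def by auto
      then show False using assms(3) by simp
    qed
  qed
  ultimately show ?thesis
    using reduced_snoc by fastforce
qed

lemma weq_conj_left_descent:
  assumes "p \<in> V" "Z = A @ p # B" "\<forall>x\<in>set A. E p x"
  shows "p # Z @ [p] \<simeq> A @ B @ [p]"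
proof -
  have "p # Z @ [p] \<simeq> A @ p # p # B @ [p]"
    using weq_commute_past[OF assms(3), of "[]"] assms(2) by simp
  also have "\<dots> \<simeq> A @ B @ [p]"
    using weq_cancel[OF assms(1)] by simp
  finally show ?thesis .
qed

lemma weq_conj_right_descent:
  assumes "p \<in> V" "Z = A @ p # B" "\<forall>x\<in>set B. E p x"
  shows "p # Z @ [p] \<simeq> p # A @ B"
proof -
  have "p # Z @ [p] \<simeq> (p # A @ B) @ p # p # []"
    using weq_commute_past[OF assms(3), of "p # A" "[p]"] assms(2) by simp
  also have "\<dots> \<simeq> p # A @ B"
    using weq_cancel[OF assms(1), of "p # A @ B" "[]"] by simp
  finally show ?thesis .
qed

lemma weq_conj_commuting:
  assumes "p \<in> V" "\<forall>x\<in>set Z. E p x"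
  shows "p # Z @ [p] \<simeq> Z"
proof -
  have "p # Z @ [p] \<simeq> Z @ p # p # []"
    using weq_commute_past[OF assms(2), of "[]" "[p]"] by simp
  also have "\<dots> \<simeq> Z"
    using weq_cancel[OF assms(1), of Z "[]"] by simp
  finally show ?thesis .
qed

definition shifts :: "'a \<Rightarrow> 'a list \<Rightarrow> 'a list \<Rightarrow> bool" where
  "shifts p Z Z' \<longleftrightarrow>
     (\<exists>A B. Z = A @ p # B \<and> (\<forall>x\<in>set A. E p x) \<and> Z' = A @ B @ [p]) \<or>
     (\<exists>A B. Z = A @ p # B \<and> (\<forall>x\<in>set B. E p x) \<and> Z' = p # A @ B) \<or>
     ((\<forall>x\<in>set Z. E p x) \<and> Z' = Z)"

lemma conj_letter_cases:
  assumes Z: "Z \<in> lists V" "reduced Z" and p: "p \<in> V"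
  shows "reduced (p # Z @ [p]) \<or>
    (\<exists>Z'. Z' \<in> lists V \<and> Z' \<simeq> p # Z @ [p] \<and> set Z' = set Z \<and> length Z' = length Z \<and> shifts p Z Z')"
proof -
  consider (left) A B where "Z = A @ p # B" "\<forall>x\<in>set A. E p x"
    | (right) A B where "Z = A @ p # B" "\<forall>x\<in>set B. E p x"
    | (commuting) "\<forall>x\<in>set Z. E p x"
    | (grows) "reduced (p # Z @ [p])"
    using reduced_conj_letter[OF Z(2)] unfolding left_descent_def right_descent_def by blast
  then show ?thesis
  proof cases
    case left
    then show ?thesis
      using weq_conj_left_descent[OF p left] Z p weq_sym unfolding shifts_def
      by (intro disjI2 exI[of _ "A @ B @ [p]"]) auto
  next
    case right
    then show ?thesis
      using weq_conj_right_descent[OF p right] Z p weq_sym unfolding shifts_def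
      by (intro disjI2 exI[of _ "p # A @ B"]) auto
  next
    case commuting
    then show ?thesis
      using weq_conj_commuting[OF p commuting] Z weq_sym unfolding shifts_def
      by (intro disjI2 exI[of _ Z]) auto
  qed simp
qed

lemma len_conj_letter:
  assumes "X \<in> lists V" "p \<in> V"
  shows "len (p # X @ [p]) = len X + 2 \<or> len (p # X @ [p]) \<le> len X"
proof -
  obtain Z where Z: "Z \<in> lists V" "reduced Z" "Z \<simeq> X" "length Z = len X"
    using exists_reduced_rep[OF assms(1)] by blast
  have conj_eq: "len (p # X @ [p]) = len (p # Z @ [p])"
    using weq_len[OF weq_context[OF Z(3), of "[p]" "[p]"]] by simp
  from conj_letter_cases[OF Z(1,2) assms(2)] show ?thesis
  proof
    assume "reduced (p # Z @ [p])"
    then show ?thesis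
      using conj_eq len_reduced[of "p # Z @ [p]"] Z(1,4) assms(2) by simp
  next
    assume "\<exists>Z'. Z' \<in> lists V \<and> Z' \<simeq> p # Z @ [p] \<and> set Z' = set Z \<and> length Z' = length Z \<and> shifts p Z Z'"
    then obtain Z' where "Z' \<in> lists V" "Z' \<simeq> p # Z @ [p]" "length Z' = length Z"
      by blast
    then show ?thesis
      using conj_eq weq_len len_le_length[of Z'] Z(4) by fastforce
  qed
qed

lemma conj_letter_len_preserving:
  assumes Z: "Z \<in> lists V" "reduced Z" and p: "p \<in> V" and same: "len (p # Z @ [p]) = length Z"
  obtains Z' where "Z' \<in> lists V" "reduced Z'" "Z' \<simeq> p # Z @ [p]" "set Z' = set Z"
    "length Z' = length Z" "shifts p Z Z'"
proof -
  have "\<not> reduced (p # Z @ [p])"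
  proof
    assume "reduced (p # Z @ [p])"
    then have "len (p # Z @ [p]) = length Z + 2"
      using len_reduced[of "p # Z @ [p]"] Z(1) p by simp
    with same show False by simp
  qed
  then obtain Z' where Z': "Z' \<in> lists V" "Z' \<simeq> p # Z @ [p]" "set Z' = set Z"
    "length Z' = length Z" "shifts p Z Z'"
    using conj_letter_cases[OF Z p] by blast
  then have "reduced Z'"
    using reduced_iff_len weq_len same by simp
  with Z' that show ?thesis by blast
qed

lemma conj_letter_moves_to_end:
  assumes Z: "Z \<in> lists V" "reduced Z" and p: "p \<in> V" and same: "len (p # Z @ [p]) = length Z"
    and "\<not> right_descent Z p" "\<not> (\<forall>x\<in>set Z. E p x)" and t: "t \<in> set Z" "t \<noteq> p"
  obtains Z' where "Z' \<in> lists V" "reduced Z'" "Z' \<simeq> p # Z @ [p]" "set Z' = set Z"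
    "length Z' = length Z" "\<exists>X. Z' = X @ [p]"
    "length (takeWhile (\<lambda>x. x \<noteq> t) Z') \<le> length (takeWhile (\<lambda>x. x \<noteq> t) Z)"
    "\<not> E p t \<Longrightarrow> length (takeWhile (\<lambda>x. x \<noteq> t) Z') < length (takeWhile (\<lambda>x. x \<noteq> t) Z)"
proof -
  obtain Z' where Z': "Z' \<in> lists V" "reduced Z'" "Z' \<simeq> p # Z @ [p]" "set Z' = set Z"
    "length Z' = length Z" "shifts p Z Z'"
    by (rule conj_letter_len_preserving[OF Z p same])
  then obtain A B where AB: "Z = A @ p # B" "\<forall>x\<in>set A. E p x" "Z' = A @ B @ [p]"
    using assms(5,6) unfolding shifts_def right_descent_def by blast
  show ?thesis
  proof (rule that[OF Z'(1-5)])
    show "\<exists>X. Z' = X @ [p]" using AB(3) by simp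
    show "length (takeWhile (\<lambda>x. x \<noteq> t) Z') \<le> length (takeWhile (\<lambda>x. x \<noteq> t) Z)"
      using length_takeWhile_move_to_end_le[of t p A B] t AB by simp
  next
    assume "\<not> E p t"
    then have "t \<notin> set A" using AB(2) by blast
    then show "length (takeWhile (\<lambda>x. x \<noteq> t) Z') < length (takeWhile (\<lambda>x. x \<noteq> t) Z)"
      using length_takeWhile_move_to_end_less[of t p A B] t AB by simp
  qed
qed

section \<open>Walks in the complement graph\<close>

lemma compl_walk_iff: "compl_walk V E W \<longleftrightarrow> W \<noteq> [] \<and> set W \<subseteq> V \<and> successively (compl_adj V E) W"
  unfolding compl_walk_def successively_conv_nth by blast

lemma compl_walk_in_lists: "compl_walk V E W \<Longrightarrow> W \<in> lists V"
  unfolding compl_walk_iff by auto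

lemma compl_walk_singleton [simp]: "compl_walk V E [a] \<longleftrightarrow> a \<in> V"
  unfolding compl_walk_iff by simp

lemma compl_walk_Cons_Cons:
  "compl_walk V E (a # b # xs) \<longleftrightarrow> compl_adj V E a b \<and> compl_walk V E (b # xs)"
  unfolding compl_walk_iff using compl_adjD by auto

lemma compl_walk_join:
  "compl_walk V E xs \<Longrightarrow> compl_walk V E (last xs # ys) \<Longrightarrow> compl_walk V E (xs @ ys)"
  unfolding compl_walk_iff by (cases ys) (auto simp: successively_append_iff)

lemma compl_walk_prefix: "compl_walk V E (xs @ ys) \<Longrightarrow> xs \<noteq> [] \<Longrightarrow> compl_walk V E xs"
  unfolding compl_walk_iff by (auto simp: successively_append_iff)

lemma compl_walk_suffix: "compl_walk V E (xs @ ys) \<Longrightarrow> ys \<noteq> [] \<Longrightarrow> compl_walk V E ys"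
  unfolding compl_walk_iff by (auto simp: successively_append_iff)

lemma compl_walk_append_adj:
  "compl_walk V E (xs @ ys) \<Longrightarrow> xs \<noteq> [] \<Longrightarrow> ys \<noteq> [] \<Longrightarrow> compl_adj V E (last xs) (hd ys)"
  unfolding compl_walk_iff by (simp add: successively_append_iff)

lemma compl_walk_reduced: "compl_walk V E W \<Longrightarrow> reduced W"
proof (rule ccontr)
  assume walk: "compl_walk V E W" and "\<not> reduced W"
  then obtain u1 a u2 u3 where W: "W = u1 @ a # u2 @ a # u3" and comm: "\<forall>x\<in>set u2. E a x"
    unfolding reduced_def by auto
  with walk show False
    by (cases u2) (auto simp: compl_walk_iff successively_append_iff dest: compl_adjD)
qed

lemma len_compl_walk_append:
  assumes "compl_walk V E (u @ w)"
  shows "len u = length u" "len w = length w"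
proof -
  have "reduced (u @ w)" "u \<in> lists V" "w \<in> lists V"
    using compl_walk_reduced[OF assms] compl_walk_in_lists[OF assms] by auto
  then show "len u = length u" "len w = length w"
    using len_reduced reduced_appendD1 reduced_appendD2 by blast+
qed

lemma compl_walk_left_descent: "compl_walk V E W \<Longrightarrow> left_descent W a \<Longrightarrow> a = hd W"
proof -
  assume walk: "compl_walk V E W" and "left_descent W a"
  then obtain A B where W: "W = A @ a # B" and comm: "\<forall>x\<in>set A. E a x"
    unfolding left_descent_def by blast
  show "a = hd W"
  proof (cases A rule: rev_cases)
    case (snoc A' x)
    then have "compl_adj V E x a"
      using walk W unfolding compl_walk_iff by (simp add: successively_append_iff)
    then show ?thesis using comm snoc compl_adjD by auto
  qed (simp add: W)
qed

lemma compl_walk_last_replicate: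
  assumes "compl_closed_walk V E ts"
  shows "compl_walk V E (last ts # concat (replicate L ts))"
proof (induction L)
  case 0
  have "ts \<in> lists V" "ts \<noteq> []"
    using assms compl_walk_in_lists unfolding compl_closed_walk_def compl_walk_def by auto
  then show ?case by (simp add: in_lists_conv_set)
next
  case (Suc L)
  have "ts \<noteq> []" "compl_walk V E ts" "compl_adj V E (last ts) (hd ts)"
    using assms compl_adj_sym unfolding compl_closed_walk_def compl_walk_def by auto
  then have "compl_walk V E (last ts # ts)"
    by (cases ts) (auto simp: compl_walk_Cons_Cons)
  then show ?case
    using compl_walk_join[of "last ts # ts"] Suc \<open>ts \<noteq> []\<close> by simp
qed

lemma compl_walk_periodic:
  assumes "compl_walk V E (U @ [last ts])" "compl_closed_walk V E ts"
  shows "compl_walk V E (U @ last ts # concat (replicate n ts))"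
  using compl_walk_join[OF assms(1)] compl_walk_last_replicate[OF assms(2)] by simp

lemma compl_walk_bounce: "compl_adj V E p q \<Longrightarrow> compl_walk V E (p # concat (replicate K [q, p]))"
  by (induction K) (auto simp: compl_walk_Cons_Cons dest: compl_adj_sym compl_adjD)

lemma exists_compl_walk_rtranclp:
  "(compl_adj V E)\<^sup>*\<^sup>* a b \<Longrightarrow> a \<in> V \<Longrightarrow> \<exists>Q. compl_walk V E (a # Q) \<and> last (a # Q) = b"
proof (induction rule: rtranclp_induct)
  case (step y z)
  then obtain Q where Q: "compl_walk V E (a # Q)" "last (a # Q) = y" by blast
  then have "compl_walk V E ((a # Q) @ [z])"
    using compl_walk_join[OF Q(1)] step(2) compl_adjD compl_walk_Cons_Cons by simp
  then show ?case by (intro exI[of _ "Q @ [z]"]) simp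
qed (intro exI[of _ "[]"], simp)

lemma reduced_conj_compl_adj:
  assumes red: "reduced (p # Z @ [p])" and pq: "compl_adj V E p q"
  shows "reduced (q # (p # Z @ [p]) @ [q])"
proof (rule reduced_conj_letter[OF red])
  show "\<not> left_descent (p # Z @ [p]) q"
    using left_descent_Cons[of p "Z @ [p]" q] compl_adjD[OF pq] by auto
  show "\<not> right_descent (p # Z @ [p]) q"
    using right_descent_snoc[of "p # Z" p q] compl_adjD[OF pq] by auto
  show "\<not> (\<forall>x\<in>set (p # Z @ [p]). E q x)"
    using compl_adjD[OF pq] by auto
qed

lemma reduced_conj_compl_walk:
  "reduced (a # Z @ [a]) \<Longrightarrow> compl_walk V E (a # W) \<Longrightarrow> reduced (conjugate (a # Z @ [a]) W)"
proof (induction W arbitrary: a Z)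
  case (Cons b W)
  then have "reduced (b # (a # Z @ [a]) @ [b])" "compl_walk V E (b # W)"
    using reduced_conj_compl_adj compl_walk_Cons_Cons by auto
  then show ?case
    using Cons.IH[of b "a # Z @ [a]"] conjugate_append[of _ "[b]" W] conjugate_snoc[of _ "[]" b]
    by simp
qed simp

section \<open>Length-preserving conjugation along walks\<close>

definition conj_stable :: "'a list \<Rightarrow> 'a list \<Rightarrow> bool" where
  "conj_stable Z Q \<longleftrightarrow> (\<forall>j\<le>length Q. len (conjugate Z (take j Q)) = length Z)"

lemma conj_stable_prefix:
  assumes "conj_stable Z (Q @ R)"
  shows "conj_stable Z Q"
  unfolding conj_stable_def
proof (intro allI impI)
  fix j assume "j \<le> length Q"
  then show "len (conjugate Z (take j Q)) = length Z"
    using assms[unfolded conj_stable_def, rule_format, of j] by simp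
qed

lemma conj_stable_len: "conj_stable Z Q \<Longrightarrow> len (conjugate Z Q) = length Z"
  unfolding conj_stable_def by (metis order_refl take_all)

lemma conj_stable_append:
  assumes stable: "conj_stable Z (Q @ R)" and Z': "Z' \<simeq> conjugate Z Q" "length Z' = length Z"
  shows "conj_stable Z' R"
  unfolding conj_stable_def
proof (intro allI impI)
  fix j assume "j \<le> length R"
  then have "len (conjugate Z (Q @ take j R)) = length Z"
    using stable[unfolded conj_stable_def, rule_format, of "length Q + j"] by simp
  moreover have "conjugate Z (Q @ take j R) \<simeq> conjugate Z' (take j R)"
    using conjugate_weq[OF weq_sym[OF Z'(1)]] conjugate_append by metis
  ultimately show "len (conjugate Z' (take j R)) = length Z'"
    using weq_len Z'(2) by simp
qed

lemma conj_stable_rev: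
  assumes "Z \<in> lists V" "Q \<in> lists V"
  shows "conj_stable (rev Z) Q \<longleftrightarrow> conj_stable Z Q"
proof -
  have "take j Q \<in> lists V" for j
    using assms(2) by (auto dest: in_set_takeD)
  then have "len (conjugate (rev Z) (take j Q)) = len (conjugate Z (take j Q))" for j
    using len_rev[OF conjugate_in_lists[OF assms(1)]] by (simp add: conjugate_rev)
  then show ?thesis unfolding conj_stable_def by simp
qed

lemma conj_stable_reduced:
  assumes Z: "Z \<in> lists V" "reduced Z" and "Q \<in> lists V" "conj_stable Z Q"
  shows "\<exists>Z'. Z' \<in> lists V \<and> reduced Z' \<and> Z' \<simeq> conjugate Z Q \<and> set Z' = set Z \<and> length Z' = length Z"
  using assms(3,4)
proof (induction Q rule: rev_induct)
  case Nil
  then show ?case using Z by auto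
next
  case (snoc p Q)
  obtain Z1 where Z1: "Z1 \<in> lists V" "reduced Z1" "Z1 \<simeq> conjugate Z Q" "set Z1 = set Z"
    "length Z1 = length Z"
    using snoc conj_stable_prefix by auto
  have conj: "conjugate Z (Q @ [p]) \<simeq> p # Z1 @ [p]"
    using weq_context[OF weq_sym[OF Z1(3)], of "[p]" "[p]"] conjugate_snoc by simp
  moreover have "len (conjugate Z (Q @ [p])) = length Z"
    using conj_stable_len[OF snoc.prems(2)] .
  ultimately have "len (p # Z1 @ [p]) = length Z1"
    using weq_len Z1(5) by simp
  then obtain Z2 where "Z2 \<in> lists V" "reduced Z2" "Z2 \<simeq> p # Z1 @ [p]" "set Z2 = set Z1"
    "length Z2 = length Z1"
    using conj_letter_len_preserving[OF Z1(1,2), of p] snoc.prems(1) by (metis in_lists_conv_set in_set_conv_decomp set_append)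
  then show ?case
    using Z1 conj weq_sym weq_trans by metis
qed

text \<open>Since \<open>q\<close> is not a right descent, stability forces \<open>q\<close> to be moved from the left to the
  end; then \<open>p\<close> is moved to the end as well, and it came from before the first \<open>t\<close> because \<open>t\<close>
  does not commute with \<open>p\<close>.\<close>

lemma conj_stable_round:
  assumes Z: "Z \<in> lists V" "reduced Z" "p \<in> set Z" "t \<in> set Z"
    and pq: "compl_adj V E p q" and tp: "compl_adj V E t p" and "t \<noteq> q"
    and descents: "\<forall>x. right_descent Z x \<longrightarrow> x = p \<or> E x p"
    and stable: "len (q # Z @ [q]) = length Z" "len (conjugate Z [q, p]) = length Z"
  obtains Z' where "Z' \<in> lists V" "reduced Z'" "Z' \<simeq> conjugate Z [q, p]" "set Z' = set Z"
    "length Z' = length Z" "\<forall>x. right_descent Z' x \<longrightarrow> x = p \<or> E x p"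
    "length (takeWhile (\<lambda>x. x \<noteq> t) Z') < length (takeWhile (\<lambda>x. x \<noteq> t) Z)"
proof -
  have adj: "p \<in> V" "q \<in> V" "t \<noteq> p" "\<not> E p q" "\<not> E q p" "p \<noteq> q" "\<not> E p t"
    using compl_adjD[OF pq] compl_adjD[OF tp] by auto
  have "\<not> right_descent Z q" "\<not> (\<forall>x\<in>set Z. E q x)"
    using descents adj Z(3) by auto
  then obtain Z2 where Z2: "Z2 \<in> lists V" "reduced Z2" "Z2 \<simeq> q # Z @ [q]" "set Z2 = set Z"
    "length Z2 = length Z" "\<exists>X. Z2 = X @ [q]"
    "length (takeWhile (\<lambda>x. x \<noteq> t) Z2) \<le> length (takeWhile (\<lambda>x. x \<noteq> t) Z)"
    "\<not> E q t \<Longrightarrow> length (takeWhile (\<lambda>x. x \<noteq> t) Z2) < length (takeWhile (\<lambda>x. x \<noteq> t) Z)"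
    by (rule conj_letter_moves_to_end[OF Z(1,2) adj(2) stable(1) _ _ Z(4) \<open>t \<noteq> q\<close>]) blast+
  have conj2: "conjugate Z [q, p] \<simeq> p # Z2 @ [p]"
    using weq_context[OF weq_sym[OF Z2(3)], of "[p]" "[p]"] by (simp add: conjugate_def)
  then have "len (p # Z2 @ [p]) = length Z2"
    using weq_len stable(2) Z2(5) by simp
  moreover have "\<not> right_descent Z2 p" "\<not> (\<forall>x\<in>set Z2. E p x)"
    using Z2(6) right_descent_snoc adj by auto
  moreover have "t \<in> set Z2" using Z2(4) Z(4) by simp
  ultimately obtain Z3 where Z3: "Z3 \<in> lists V" "reduced Z3" "Z3 \<simeq> p # Z2 @ [p]" "set Z3 = set Z2"
    "length Z3 = length Z2" "\<exists>X. Z3 = X @ [p]"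
    "length (takeWhile (\<lambda>x. x \<noteq> t) Z3) \<le> length (takeWhile (\<lambda>x. x \<noteq> t) Z2)"
    "\<not> E p t \<Longrightarrow> length (takeWhile (\<lambda>x. x \<noteq> t) Z3) < length (takeWhile (\<lambda>x. x \<noteq> t) Z2)"
    by (rule conj_letter_moves_to_end[OF Z2(1,2) adj(1) _ _ _ _ adj(3)]) blast+
  show ?thesis
  proof (rule that[OF Z3(1,2)])
    show "Z3 \<simeq> conjugate Z [q, p]"
      using Z3(3) weq_sym[OF conj2] by (rule weq_trans)
    show "\<forall>x. right_descent Z3 x \<longrightarrow> x = p \<or> E x p"
      using Z3(6) right_descent_snoc by blast
    show "length (takeWhile (\<lambda>x. x \<noteq> t) Z3) < length (takeWhile (\<lambda>x. x \<noteq> t) Z)"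
      using Z3(8)[OF adj(7)] Z2(7) by simp
  qed (use Z2 Z3 in simp_all)
qed

lemma conj_stable_bounce_bound:
  assumes "Z \<in> lists V" "reduced Z" "p \<in> set Z" "t \<in> set Z"
    and "compl_adj V E p q" "compl_adj V E t p" "t \<noteq> q"
    and "\<forall>x. right_descent Z x \<longrightarrow> x = p \<or> E x p"
    and "conj_stable Z (concat (replicate K [q, p]))"
  shows "K \<le> length (takeWhile (\<lambda>x. x \<noteq> t) Z)"
  using assms
proof (induction K arbitrary: Z)
  case (Suc K)
  let ?rest = "concat (replicate K [q, p])"
  have "len (conjugate Z (take j ([q, p] @ ?rest))) = length Z" if "j \<le> 2" for j
    using Suc.prems(9) that unfolding conj_stable_def by simp
  from this[of 1] this[of 2] have "len (q # Z @ [q]) = length Z" "len (conjugate Z [q, p]) = length Z"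
    by (simp_all add: conjugate_def)
  then obtain Z' where Z': "Z' \<in> lists V" "reduced Z'" "Z' \<simeq> conjugate Z [q, p]" "set Z' = set Z"
    "length Z' = length Z" "\<forall>x. right_descent Z' x \<longrightarrow> x = p \<or> E x p"
    "length (takeWhile (\<lambda>x. x \<noteq> t) Z') < length (takeWhile (\<lambda>x. x \<noteq> t) Z)"
    using conj_stable_round[of Z p t q] Suc.prems by metis
  have "conj_stable Z' ?rest"
    using conj_stable_append[of Z "[q, p]" ?rest Z'] Suc.prems(9) Z'(3,5) by simp
  then have "K \<le> length (takeWhile (\<lambda>x. x \<noteq> t) Z')"
    using Suc.IH[of Z'] Z' Suc.prems by simp
  with Z'(7) show ?case by simp
qed simp

lemma shifts_descents:
  assumes "shifts p Z Z'" "p \<in> set Z"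
  shows "(\<forall>x. right_descent Z' x \<longrightarrow> x = p \<or> E x p) \<or> (\<forall>x. right_descent (rev Z') x \<longrightarrow> x = p \<or> E x p)"
proof -
  consider (to_end) A B where "Z' = A @ B @ [p]" | (to_front) A B where "Z' = p # A @ B"
    | (commuting) "\<forall>x\<in>set Z. E p x"
    using assms(1) unfolding shifts_def by blast
  then show ?thesis
  proof cases
    case to_end
    then show ?thesis using right_descent_snoc[of "A @ B" p] by simp
  next
    case to_front
    then show ?thesis using left_descent_Cons[of p "A @ B"] right_descent_rev[of Z'] by simp
  next
    case commuting
    then show ?thesis using assms(2) by auto
  qed
qed

lemma conj_stable_shift:
  assumes Z: "Z \<in> lists V" "reduced Z" and Q: "Q \<in> lists V" and p: "p \<in> V"
    and stable: "conj_stable Z (Q @ p # R)"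
  obtains Z1 Z2 where "set Z1 = set Z" "shifts p Z1 Z2" "Z2 \<in> lists V" "reduced Z2"
    "set Z2 = set Z" "length Z2 = length Z" "conj_stable Z2 R"
proof -
  obtain Z1 where Z1: "Z1 \<in> lists V" "reduced Z1" "Z1 \<simeq> conjugate Z Q" "set Z1 = set Z"
    "length Z1 = length Z"
    using conj_stable_reduced[OF Z Q] conj_stable_prefix stable by metis
  have conj: "conjugate Z (Q @ [p]) \<simeq> p # Z1 @ [p]"
    using weq_context[OF weq_sym[OF Z1(3)], of "[p]" "[p]"] conjugate_snoc by simp
  have "len (conjugate Z (Q @ [p])) = length Z"
    using conj_stable_len conj_stable_prefix[of Z "Q @ [p]" R] stable by simp
  then have "len (p # Z1 @ [p]) = length Z1"
    using weq_len[OF conj] Z1(5) by simp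
  then obtain Z2 where Z2: "Z2 \<in> lists V" "reduced Z2" "Z2 \<simeq> p # Z1 @ [p]" "set Z2 = set Z1"
    "length Z2 = length Z1" "shifts p Z1 Z2"
    by (rule conj_letter_len_preserving[OF Z1(1,2) p])
  have "Z2 \<simeq> conjugate Z (Q @ [p])"
    using Z2(3) weq_sym[OF conj] by (rule weq_trans)
  then have "conj_stable Z2 R"
    using conj_stable_append[of Z "Q @ [p]" R Z2] stable Z2(5) Z1(5) by simp
  with Z1 Z2 that show ?thesis by simp
qed

lemma not_conj_stable_bounce:
  assumes Z: "Z \<in> lists V" "reduced Z" "set Z = V" and Q: "Q \<in> lists V"
    and pq: "compl_adj V E p q" and tp: "compl_adj V E t p" and "t \<noteq> q"
  shows "\<not> conj_stable Z (Q @ p # concat (replicate (Suc (length Z)) [q, p]))"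
    (is "\<not> conj_stable Z (Q @ p # ?B)")
proof
  assume "conj_stable Z (Q @ p # ?B)"
  moreover have pV: "p \<in> V" "t \<in> V" using compl_adjD[OF pq] compl_adjD[OF tp] by auto
  ultimately obtain Z1 Z2 where Z2: "set Z1 = V" "shifts p Z1 Z2" "Z2 \<in> lists V" "reduced Z2"
    "set Z2 = V" "length Z2 = length Z" "conj_stable Z2 ?B"
    using conj_stable_shift[OF Z(1,2) Q] Z(3) by metis
  have "?B \<in> lists V"
    using compl_walk_in_lists[OF compl_walk_bounce[OF pq]] compl_adjD[OF pq] by simp
  then have "conj_stable (rev Z2) ?B"
    using conj_stable_rev Z2(3,7) by blast
  moreover obtain Z' where "Z' \<in> {Z2, rev Z2}" "\<forall>x. right_descent Z' x \<longrightarrow> x = p \<or> E x p"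
    using shifts_descents[OF Z2(2)] Z2(1) pV by auto
  ultimately have Z': "Z' \<in> lists V" "reduced Z'" "set Z' = V" "length Z' = length Z"
    "\<forall>x. right_descent Z' x \<longrightarrow> x = p \<or> E x p" "conj_stable Z' ?B"
    using Z2 reduced_rev by (auto simp: in_lists_conv_set)
  have "Suc (length Z) \<le> length (takeWhile (\<lambda>x. x \<noteq> t) Z')"
    using conj_stable_bounce_bound[OF Z'(1,2) _ _ pq tp \<open>t \<noteq> q\<close> Z'(5,6)] Z'(3) pV by simp
  then show False
    using length_takeWhile_le[of _ Z'] Z'(4) by (metis Suc_n_not_le_n le_trans)
qed

lemma not_conj_stable_new_letter:
  assumes Z: "Z \<in> lists V" "reduced Z" and Q: "Q \<in> lists V"
    and t: "t \<in> V" "t \<notin> set Z" "\<not> (\<forall>x\<in>set Z. E t x)"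
  shows "\<not> conj_stable Z (Q @ [t])"
proof
  assume stable: "conj_stable Z (Q @ [t])"
  obtain Z' where Z': "Z' \<in> lists V" "reduced Z'" "Z' \<simeq> conjugate Z Q" "set Z' = set Z"
    "length Z' = length Z"
    using conj_stable_reduced[OF Z Q] conj_stable_prefix[OF stable] by metis
  have "reduced (t # Z' @ [t])"
    using reduced_conj_letter[OF Z'(2)] left_descent_in_set right_descent_in_set t Z'(4) by metis
  then have "len (t # Z' @ [t]) = length Z + 2"
    using len_reduced[of "t # Z' @ [t]"] Z'(1,5) t(1) by simp
  moreover have "t # Z' @ [t] \<simeq> conjugate Z (Q @ [t])"
    using weq_context[OF Z'(3), of "[t]" "[t]"] conjugate_snoc by simp
  moreover have "len (conjugate Z (Q @ [t])) = length Z"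
    using conj_stable_len[OF stable] .
  ultimately show False
    using weq_len by simp
qed

section \<open>Growing conjugation along walks\<close>

definition conj_grows :: "'a list \<Rightarrow> 'a \<Rightarrow> bool" where
  "conj_grows X p \<longleftrightarrow> len (p # X @ [p]) = len X + 2"

definition grows_along :: "'a list \<Rightarrow> 'a list \<Rightarrow> bool" where
  "grows_along Y P \<longleftrightarrow> (\<exists>j<length P. conj_grows (conjugate Y (take j P)) (P ! j))"

lemma conj_grows_weq: "X \<simeq> X' \<Longrightarrow> conj_grows X p \<longleftrightarrow> conj_grows X' p"
  unfolding conj_grows_def using weq_len[of X X'] weq_len[OF weq_context[of X X' "[p]" "[p]"]] by simp

lemma grows_along_weq: "Y \<simeq> Y' \<Longrightarrow> grows_along Y P \<longleftrightarrow> grows_along Y' P"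
  unfolding grows_along_def by (simp add: conj_grows_weq[OF conjugate_weq])

lemma grows_along_append_left:
  assumes "grows_along Y P"
  shows "grows_along Y (P @ Q)"
proof -
  obtain j where "j < length P" "conj_grows (conjugate Y (take j P)) (P ! j)"
    using assms unfolding grows_along_def by blast
  then show ?thesis
    unfolding grows_along_def by (intro exI[of _ j]) (simp add: nth_append)
qed

lemma grows_along_append_right:
  assumes "grows_along (conjugate Y P) Q"
  shows "grows_along Y (P @ Q)"
proof -
  obtain j where "j < length Q" "conj_grows (conjugate (conjugate Y P) (take j Q)) (Q ! j)"
    using assms unfolding grows_along_def by blast
  then show ?thesis
    unfolding grows_along_def by (intro exI[of _ "length P + j"]) (simp add: conjugate_append)
qed

lemma not_grows_along_shrinks:
  assumes Z: "Z \<in> lists V" "reduced Z" and Q: "Q \<in> lists V"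
    and "\<not> grows_along Z Q" "\<not> conj_stable Z Q"
  shows "\<exists>j<length Q. len (conjugate Z (take (Suc j) Q)) < length Z"
proof (rule ccontr)
  assume no_shrink: "\<not> ?thesis"
  have "len (conjugate Z (take j Q)) = length Z" if "j \<le> length Q" for j
    using that
  proof (induction j)
    case 0
    then show ?case using len_reduced Z by simp
  next
    case (Suc j)
    let ?X = "conjugate Z (take j Q)"
    have j: "j < length Q" using Suc.prems by simp
    have "?X \<in> lists V" "Q ! j \<in> V"
      using conjugate_in_lists[OF Z(1)] Q j by (auto dest: in_set_takeD)
    moreover have "\<not> conj_grows ?X (Q ! j)"
      using \<open>\<not> grows_along Z Q\<close> j unfolding grows_along_def by blast
    ultimately have "len (Q ! j # ?X @ [Q ! j]) \<le> len ?X"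
      using len_conj_letter unfolding conj_grows_def by blast
    moreover have "conjugate Z (take (Suc j) Q) = Q ! j # ?X @ [Q ! j]"
      using j by (simp add: take_Suc_conv_app_nth conjugate_snoc)
    ultimately show ?case
      using Suc no_shrink j by (metis Suc_leD le_neq_implies_less)
  qed
  then show False
    using \<open>\<not> conj_stable Z Q\<close> unfolding conj_stable_def by blast
qed

lemma len_conj_after_growth:
  assumes W: "compl_walk V E W" and Y: "Y \<in> lists V" and i: "i < length W"
    and grows: "conj_grows (conjugate Y (take i W)) (W ! i)"
  shows "len (conjugate Y W) = len (conjugate Y (take i W)) + 2 * (length W - i)"
proof -
  let ?X = "conjugate Y (take i W)" and ?a = "W ! i" and ?R = "drop (Suc i) W"
  have WV: "W \<in> lists V" using compl_walk_in_lists[OF W] .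
  then have XV: "?X \<in> lists V" and aV: "?a \<in> V"
    using conjugate_in_lists[OF Y] i by (auto dest: in_set_takeD)
  obtain Z where Z: "Z \<in> lists V" "Z \<simeq> ?X" "length Z = len ?X"
    using exists_geodesic[OF XV] by blast
  have conj_Z: "?a # Z @ [?a] \<simeq> ?a # ?X @ [?a]"
    using weq_context[OF Z(2), of "[?a]" "[?a]"] by simp
  then have "reduced (?a # Z @ [?a])"
    using reduced_iff_len[of "?a # Z @ [?a]"] grows Z aV weq_len unfolding conj_grows_def by simp
  moreover have "compl_walk V E (?a # ?R)"
    using compl_walk_suffix[of "take i W" "drop i W"] W i by (simp add: Cons_nth_drop_Suc)
  ultimately have red: "reduced (conjugate (?a # Z @ [?a]) ?R)"
    by (rule reduced_conj_compl_walk)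
  have "W = take i W @ [?a] @ ?R"
    using i by (simp add: Cons_nth_drop_Suc)
  then have "conjugate Y W = conjugate (?a # ?X @ [?a]) ?R"
    by (metis conjugate_append conjugate_snoc append_Nil)
  then have "len (conjugate Y W) = len (conjugate (?a # Z @ [?a]) ?R)"
    using weq_len conjugate_weq[OF conj_Z] weq_sym by metis
  also have "\<dots> = length (conjugate (?a # Z @ [?a]) ?R)"
  proof (rule len_reduced[OF red], rule conjugate_in_lists)
    show "?a # Z @ [?a] \<in> lists V" using Z(1) aV by simp
    show "?R \<in> lists V" using WV by (auto dest: in_set_dropD)
  qed
  finally show ?thesis
    using Z(3) i by (simp add: conjugate_def)
qed

lemma len_conj_grows_along:
  assumes W: "compl_walk V E (P @ R)" and Y: "Y \<in> lists V" and "grows_along Y P"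
  shows "2 * length R < len (conjugate Y (P @ R))"
proof -
  obtain j where j: "j < length P" "conj_grows (conjugate Y (take j P)) (P ! j)"
    using \<open>grows_along Y P\<close> unfolding grows_along_def by blast
  then have "len (conjugate Y (P @ R)) = len (conjugate Y (take j P)) + 2 * (length (P @ R) - j)"
    using len_conj_after_growth[OF W Y, of j] by (simp add: nth_append)
  then show ?thesis using j(1) by simp
qed

lemma not_racg_le_if_conj_longer:
  assumes "u \<in> lists V" "x \<in> lists V" and "len x < len (conjugate x u)"
  shows "\<not> racg_le V E u (x @ u)"
  using assms len_append_le[of x u] unfolding racg_le_def conjugate_def by simp

end

section \<open>Connected complement graphs\<close>

locale racg_complement_connected = racg_graph +
  assumes compl_connected: "compl_connected V E" and three_vertices: "card V \<ge> 3"
begin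

lemma exists_compl_walk: "a \<in> V \<Longrightarrow> b \<in> V \<Longrightarrow> \<exists>Q. compl_walk V E (a # Q) \<and> last (a # Q) = b"
  using exists_compl_walk_rtranclp compl_connected unfolding compl_connected_def by blast

lemma exists_compl_adj: "a \<in> V \<Longrightarrow> \<exists>c. compl_adj V E a c"
proof -
  assume a: "a \<in> V"
  have "\<not> V \<subseteq> {a}"
    using three_vertices card_mono[of "{a}" V] by auto
  then obtain d where "d \<in> V" "d \<noteq> a" by blast
  then have "(compl_adj V E)\<^sup>*\<^sup>* a d" "a \<noteq> d"
    using a compl_connected unfolding compl_connected_def by auto
  then show ?thesis by (metis converse_rtranclpE)
qed

lemma exists_compl_walk_to: "a \<in> V \<Longrightarrow> b \<in> V \<Longrightarrow> \<exists>Q. compl_walk V E (a # Q @ [b])"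
proof -
  assume a: "a \<in> V" and b: "b \<in> V"
  obtain c where c: "compl_adj V E a c" using exists_compl_adj[OF a] by blast
  obtain Q where Q: "compl_walk V E (c # Q)" "last (c # Q) = b"
    using exists_compl_walk[OF _ b] compl_adjD[OF c] by blast
  then have "compl_walk V E (a # butlast (c # Q) @ [b])"
    using c compl_walk_Cons_Cons by (metis append_butlast_last_id list.distinct(1))
  then show ?thesis by blast
qed

lemma exists_compl_path3: "\<exists>p q t. compl_adj V E p q \<and> compl_adj V E t p \<and> t \<noteq> q"
proof -
  obtain a where a: "a \<in> V" using three_vertices by fastforce
  obtain b where ab: "compl_adj V E a b" using exists_compl_adj[OF a] by blast
  have "\<not> V \<subseteq> {a, b}"
    using three_vertices card_mono[of "{a, b}" V] card_insert_le_m1[of 2 "{b}" a] by auto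
  then obtain c where c: "c \<in> V" "c \<notin> {a, b}" by blast
  have "(compl_adj V E)\<^sup>*\<^sup>* c a"
    using c a compl_connected unfolding compl_connected_def by blast
  then obtain u v where "compl_adj V E u v" "u \<notin> {a, b}" "v \<in> {a, b}"
    using rtranclp_enters[of "compl_adj V E" c a "{a, b}"] c by blast
  then show ?thesis
    using ab compl_adj_sym by blast
qed

lemma exists_not_right_descent: "\<exists>v\<in>V. \<not> right_descent Z v"
proof -
  obtain a where a: "a \<in> V" using three_vertices by fastforce
  obtain b where "compl_adj V E a b" using exists_compl_adj[OF a] by blast
  then show ?thesis
    using right_descents_commute[of Z a b] compl_adjD by blast
qed

lemma exists_compl_walk_covering: "a \<in> V \<Longrightarrow> set vs \<subseteq> V \<Longrightarrow> \<exists>Q. compl_walk V E (a # Q) \<and> set vs \<subseteq> set Q"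
proof (induction vs)
  case Nil
  then show ?case using compl_walk_singleton by blast
next
  case (Cons v vs)
  then obtain Q where Q: "compl_walk V E (a # Q)" "set vs \<subseteq> set Q" by auto
  have "last (a # Q) \<in> V"
    using compl_walk_in_lists[OF Q(1)] by (metis in_listsD last_in_set list.distinct(1))
  moreover have "v \<in> V" using Cons.prems by simp
  ultimately obtain Q' where "compl_walk V E (last (a # Q) # Q' @ [v])"
    using exists_compl_walk_to by blast
  then have "compl_walk V E (a # Q @ Q' @ [v])"
    using compl_walk_join[OF Q(1)] by simp
  then show ?case using Q(2) by (intro exI[of _ "Q @ Q' @ [v]"]) auto
qed

lemma exists_closed_walk_covering: "\<exists>ts. compl_closed_walk V E ts \<and> set ts = V"
proof -
  obtain a where a: "a \<in> V" using three_vertices by fastforce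
  obtain vs where "set vs = V" using finite_list[OF finite_V] by blast
  then obtain Q where Q: "compl_walk V E (a # Q)" "V \<subseteq> set Q"
    using exists_compl_walk_covering[OF a] by auto
  have "last (a # Q) \<in> V"
    using compl_walk_in_lists[OF Q(1)] by (metis in_listsD last_in_set list.distinct(1))
  then obtain Q' where "compl_walk V E (last (a # Q) # Q' @ [a])"
    using exists_compl_walk_to a by blast
  then have walk: "compl_walk V E ((a # Q @ Q') @ [a])"
    using compl_walk_join[OF Q(1)] by simp
  then have "compl_closed_walk V E (a # Q @ Q')"
    using compl_walk_prefix[OF walk] compl_adj_sym[OF compl_walk_append_adj[OF walk]]
    unfolding compl_closed_walk_def by simp
  moreover have "set (a # Q @ Q') = V"
    using Q(2) compl_walk_in_lists[OF walk] by auto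
  ultimately show ?thesis by blast
qed

lemma set_eq_V_if_commuting_outside:
  assumes "Z \<in> lists V" "Z \<noteq> []" and outside: "\<forall>t\<in>V. t \<notin> set Z \<longrightarrow> (\<forall>x\<in>set Z. E t x)"
  shows "set Z = V"
proof (rule ccontr)
  assume "set Z \<noteq> V"
  then obtain t where t: "t \<in> V" "t \<notin> set Z" using assms(1) by auto
  obtain s where s: "s \<in> set Z" using assms(2) by (cases Z) auto
  then have "(compl_adj V E)\<^sup>*\<^sup>* t s"
    using t assms(1) compl_connected unfolding compl_connected_def by auto
  then obtain u v where "compl_adj V E u v" "u \<notin> set Z" "v \<in> set Z"
    using rtranclp_enters[OF _ t(2) s] by blast
  then show False using outside compl_adjD by blast
qed

lemma exists_walk_not_conj_stable:
  assumes Z: "Z \<in> lists V" "reduced Z" "Z \<noteq> []" and r: "r \<in> V"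
  shows "\<exists>Q. compl_walk V E (r # Q) \<and> \<not> conj_stable Z Q"
proof (cases "\<exists>t\<in>V. t \<notin> set Z \<and> \<not> (\<forall>x\<in>set Z. E t x)")
  case True
  then obtain t where t: "t \<in> V" "t \<notin> set Z" "\<not> (\<forall>x\<in>set Z. E t x)" by blast
  obtain Q where Q: "compl_walk V E (r # Q @ [t])"
    using exists_compl_walk_to[OF r t(1)] by blast
  then have "Q \<in> lists V" using compl_walk_in_lists[OF Q] by simp
  then show ?thesis
    using Q not_conj_stable_new_letter[OF Z(1,2) _ t] by (metis append_Cons)
next
  case False
  then have "set Z = V"
    using set_eq_V_if_commuting_outside Z by blast
  obtain p q t where pqt: "compl_adj V E p q" "compl_adj V E t p" "t \<noteq> q"
    using exists_compl_path3 by blast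
  obtain Q where Q: "compl_walk V E (r # Q @ [p])"
    using exists_compl_walk_to[OF r] compl_adjD[OF pqt(1)] by blast
  let ?B = "concat (replicate (Suc (length Z)) [q, p])"
  have "compl_walk V E (r # Q @ p # ?B)"
    using compl_walk_join[OF Q] compl_walk_bounce[OF pqt(1), of "Suc (length Z)"] by simp
  moreover have "\<not> conj_stable Z (Q @ p # ?B)"
    using not_conj_stable_bounce[OF Z(1,2) \<open>set Z = V\<close> _ pqt] compl_walk_in_lists[OF Q] by simp
  ultimately show ?thesis by blast
qed

lemma exists_walk_grows_along:
  assumes "Y \<in> lists V" "\<not> Y \<simeq> []" "r \<in> V"
  shows "\<exists>P. compl_walk V E (r # P) \<and> grows_along Y P"
  using assms
proof (induction "len Y" arbitrary: Y r rule: less_induct)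
  case less
  obtain Z where Z: "Z \<in> lists V" "reduced Z" "Z \<simeq> Y" "length Z = len Y"
    using exists_reduced_rep[OF less.prems(1)] by blast
  have "Z \<noteq> []" using Z(3) less.prems(2) weq_sym by auto
  then obtain Q where Q: "compl_walk V E (r # Q)" "\<not> conj_stable Z Q"
    using exists_walk_not_conj_stable[OF Z(1,2) _ less.prems(3)] by blast
  have QV: "Q \<in> lists V" using compl_walk_in_lists[OF Q(1)] by simp
  show ?case
  proof (cases "grows_along Z Q")
    case True
    then show ?thesis using Q(1) grows_along_weq[OF Z(3)] by blast
  next
    case False
    then obtain j where j: "j < length Q" and shrinks: "len (conjugate Z (take (Suc j) Q)) < len Y"
      using not_grows_along_shrinks[OF Z(1,2) QV False Q(2)] Z(4) by auto
    let ?Q = "take (Suc j) Q"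
    have QjV: "?Q \<in> lists V" "Q ! j \<in> V"
      using QV j by (auto dest: in_set_takeD)
    moreover have "\<not> conjugate Z ?Q \<simeq> []"
      using conjugate_trivialD[OF QjV(1)] Z(3) less.prems(2) weq_sym weq_trans by blast
    ultimately obtain P where P: "compl_walk V E (Q ! j # P)" "grows_along (conjugate Z ?Q) P"
      using less.hyps[OF shrinks] conjugate_in_lists[OF Z(1)] by blast
    have "compl_walk V E (r # ?Q)"
      using compl_walk_prefix[of "r # ?Q" "drop (Suc j) Q"] Q(1) by simp
    moreover have "last (r # ?Q) = Q ! j"
      using j by (simp add: take_Suc_conv_app_nth)
    ultimately have "compl_walk V E (r # ?Q @ P)"
      using compl_walk_join P(1) by fastforce
    moreover have "grows_along Y (?Q @ P)"
      using grows_along_append_right[OF P(2)] grows_along_weq[OF Z(3)] by blast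
    ultimately show ?thesis by blast
  qed
qed

lemma exists_walk_grows_along_all:
  assumes "finite Ys" "\<forall>Y\<in>Ys. Y \<in> lists V \<and> \<not> Y \<simeq> []" "r \<in> V"
  shows "\<exists>P. compl_walk V E (r # P) \<and> (\<forall>Y\<in>Ys. grows_along Y (r # P))"
  using assms
proof (induction Ys rule: finite_induct)
  case empty
  then show ?case using compl_walk_singleton by blast
next
  case (insert Y Ys)
  then obtain P1 where P1: "compl_walk V E (r # P1)" "\<forall>Y\<in>Ys. grows_along Y (r # P1)" by auto
  have P1V: "r # P1 \<in> lists V" using compl_walk_in_lists[OF P1(1)] .
  have "conjugate Y (r # P1) \<in> lists V" "\<not> conjugate Y (r # P1) \<simeq> []"
    using insert.prems conjugate_in_lists[OF _ P1V] conjugate_trivialD[OF P1V] by auto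
  moreover have "last (r # P1) \<in> V"
    using P1V by (metis in_listsD last_in_set list.distinct(1))
  ultimately obtain P2 where P2: "compl_walk V E (last (r # P1) # P2)"
    "grows_along (conjugate Y (r # P1)) P2"
    using exists_walk_grows_along by blast
  have "compl_walk V E (r # P1 @ P2)"
    using compl_walk_join[OF P1(1) P2(1)] by simp
  moreover have "\<forall>Y'\<in>insert Y Ys. grows_along Y' ((r # P1) @ P2)"
    using P1(2) P2(2) grows_along_append_left grows_along_append_right by blast
  ultimately show ?case by auto
qed

lemma exists_start_len_append_walk:
  assumes "w \<in> lists V"
  obtains r where "r \<in> V" "\<And>W. compl_walk V E W \<Longrightarrow> hd W = r \<Longrightarrow> len (w @ W) = len w + length W"
proof -
  obtain w' where w': "w' \<in> lists V" "reduced w'" "w' \<simeq> w" "length w' = len w"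
    using exists_reduced_rep[OF assms] by blast
  obtain r where r: "r \<in> V" "\<not> right_descent w' r"
    using exists_not_right_descent by blast
  have "len (w @ W) = len w + length W" if W: "compl_walk V E W" "hd W = r" for W
  proof -
    have "reduced (w' @ W)"
      using reduced_append[OF w'(2) compl_walk_reduced[OF W(1)]] compl_walk_left_descent[OF W(1)] W(2) r(2)
      by blast
    then have "len (w' @ W) = length w' + length W"
      using len_reduced w'(1) compl_walk_in_lists[OF W(1)] by simp
    moreover have "len (w @ W) = len (w' @ W)"
      using weq_len[OF weq_append[OF w'(3) weq_refl]] by simp
    ultimately show ?thesis using w'(4) by simp
  qed
  with r(1) that show ?thesis by blast
qed

lemma exists_extension:
  assumes w: "w \<in> lists V" and ts: "compl_closed_walk V E ts"
    and Ys: "finite Ys" "\<forall>Y\<in>Ys. Y \<in> lists V \<and> \<not> Y \<simeq> []"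
  obtains v where "\<And>L. v @ concat (replicate L ts) \<in> lists V"
    "\<And>L. len (w @ v @ concat (replicate L ts)) = len w + len v + len (concat (replicate L ts))"
    "\<And>Y L. Y \<in> Ys \<Longrightarrow> M < len (conjugate Y (v @ concat (replicate L ts)))"
proof -
  obtain r where r: "r \<in> V"
    and additive: "\<And>W. compl_walk V E W \<Longrightarrow> hd W = r \<Longrightarrow> len (w @ W) = len w + length W"
    using exists_start_len_append_walk[OF w] by blast
  obtain P where P: "compl_walk V E (r # P)" "\<forall>Y\<in>Ys. grows_along Y (r # P)"
    using exists_walk_grows_along_all[OF Ys r] by blast
  have ts_ne: "ts \<noteq> []" and "last ts \<in> V" "last (r # P) \<in> V"
    using ts compl_walk_in_lists[OF P(1)] unfolding compl_closed_walk_def compl_walk_def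
    by (auto dest: in_listsD)
  then obtain Q where Q: "compl_walk V E (last (r # P) # Q @ [last ts])"
    using exists_compl_walk_to by blast
  define v where "v = r # P @ Q @ last ts # concat (replicate M ts)"
  have "compl_walk V E ((r # P @ Q) @ [last ts])"
    using compl_walk_join[OF P(1) Q] by simp
  then have walk: "compl_walk V E (v @ concat (replicate L ts))" for L
    using compl_walk_periodic[OF _ ts, of "r # P @ Q" "M + L"]
    unfolding v_def by (simp add: replicate_add)
  have "len (w @ v @ concat (replicate L ts)) = len w + len v + len (concat (replicate L ts))" for L
    using additive[OF walk] len_compl_walk_append[OF walk] by (simp add: v_def)
  moreover have "M < len (conjugate Y (v @ concat (replicate L ts)))" if "Y \<in> Ys" for Y L
  proof -
    let ?R = "Q @ last ts # concat (replicate (M + L) ts)"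
    have "v @ concat (replicate L ts) = (r # P) @ ?R"
      unfolding v_def by (simp add: replicate_add)
    then have "2 * length ?R < len (conjugate Y (v @ concat (replicate L ts)))"
      using len_conj_grows_along walk Ys(2) P(2) that by metis
    moreover have "M \<le> length ?R"
      using length_concat_replicate_ge[OF ts_ne, of "M + L"] by simp
    ultimately show ?thesis by simp
  qed
  ultimately show ?thesis
    using that compl_walk_in_lists[OF walk] by blast
qed

end

theorem proposition2p5:
  fixes V :: "'a set" and E :: "'a \<Rightarrow> 'a \<Rightarrow> bool"
    and w :: "'a list" and S :: "'a list set"
  assumes "simple_graph V E"
    and "card V \<ge> 3"
    and "compl_connected V E"
    and "w \<in> lists V"
    and "S \<subseteq> lists V" and "finite S"
  shows "\<exists>v ts. v \<in> lists V \<and> compl_closed_walk V E ts \<and> set ts = V \<and>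
     (\<forall>L::nat. L \<ge> 1 \<longrightarrow> (\<forall>x\<in>S. \<not> racg_eq V E x [] \<longrightarrow>
        racg_len V E (w @ v @ concat (replicate L ts))
          = racg_len V E w + racg_len V E v + racg_len V E (concat (replicate L ts))
      \<and> \<not> racg_le V E (w @ v @ concat (replicate L ts))
                     (x @ w @ v @ concat (replicate L ts))))"
proof -
  interpret racg_complement_connected V E
    using assms(1-3) by unfold_locales
  obtain ts where ts: "compl_closed_walk V E ts" "set ts = V"
    using exists_closed_walk_covering by blast
  obtain M where M: "\<forall>x\<in>S. len x \<le> M"
    using finite_nat_set_iff_bounded_le[of "len ` S"] assms(6) by auto
  let ?Ys = "(\<lambda>x. conjugate x w) ` {x \<in> S. \<not> x \<simeq> []}"
  have "finite ?Ys" using assms(6) by simp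
  moreover have "\<forall>Y\<in>?Ys. Y \<in> lists V \<and> \<not> Y \<simeq> []"
    using assms(4,5) conjugate_in_lists conjugate_trivialD[OF assms(4)] by blast
  ultimately obtain v where v: "\<And>L. v @ concat (replicate L ts) \<in> lists V"
    "\<And>L. len (w @ v @ concat (replicate L ts)) = len w + len v + len (concat (replicate L ts))"
    "\<And>Y L. Y \<in> ?Ys \<Longrightarrow> M < len (conjugate Y (v @ concat (replicate L ts)))"
    by (rule exists_extension[OF assms(4) ts(1), where M = M]) blast
  have "\<not> racg_le V E (w @ v @ concat (replicate L ts)) (x @ w @ v @ concat (replicate L ts))"
    if "x \<in> S" "\<not> x \<simeq> []" for x L
  proof (rule not_racg_le_if_conj_longer)
    show "w @ v @ concat (replicate L ts) \<in> lists V" "x \<in> lists V"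
      using assms(4,5) v(1) that(1) by auto
    show "len x < len (conjugate x (w @ v @ concat (replicate L ts)))"
      using v(3)[of "conjugate x w" L] that M le_less_trans by (fastforce simp: conjugate_append)
  qed
  moreover have "v \<in> lists V"
    using v(1)[of 0] by simp
  ultimately show ?thesis
    using v(2) ts by blast
qed

end
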